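(* Let $(\mathfrak g,\mu,P)$ be a Nijenhuis Lie algebra and $(M,P_M)$ a Nijenhuis representation over it. Then $(\mathrm C^\bullet_{\mathrm{NjO}}(\mathfrak g,M),\delta_{\mathrm{NjO},M})$ is a cochain complex, i.e. $\delta_{\mathrm{NjO},M}\circ\delta_{\mathrm{NjO},M}=0$.
   Context: All vector spaces are over a field $\mathbf k$ of characteristic $0$. A Nijenhuis Lie algebra is a Lie algebra $(\mathfrak g,\mu=[-,-]_\mu)$ with a linear $P:\mathfrak g\to\mathfrak g$ satisfying $[P a,P b]_\mu=P([Pa,b]_\mu+[a,Pb]_\mu-P[a,b]_\mu)$. A Nijenhuis representation is a Lie algebra representation $M$ of $(\mathfrak g,\mu)$ (action $a x$) with linear $P_M:M\to M$ such that $P(a)P_M(x)=P_M(P(a)x+aP_M(x)-P_M(ax))$. For a Lie algebra $(\mathfrak g,\mu)$ and representation $M$, the Chevalley–Eilenberg complex is $\mathrm C^n_{\mathrm{Lie}}(\mathfrak g,M)=\mathrm{Hom}(\wedge^n\mathfrak g,M)$, $n\ge0$, with $\delta_{\mathrm{Lie},M}(f)(a_1,\dots,a_{n+1})=\sum_{i=1}^{n+1}(-1)^{i-1}a_i f(a_1,\dots,\widehat{a_i},\dots,a_{n+1})+\sum_{i<j}(-1)^{i+j}f([a_i,a_j]_\mu,a_1,\dots,\widehat{a_i},\dots,\widehat{a_j},\dots,a_{n+1})$. Put $[a,b]_P:=[Pa,b]_\mu+[a,Pb]_\mu-P[a,b]_\mu$ and let $\mathfrak g$ act on $M$ by $a\rhd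 x:=P(a)x$. Let $\partial:\mathrm{Hom}(\wedge^n\mathfrak g,M)\to\mathrm{Hom}(\wedge^{n+1}\mathfrak g,M)$ be the Chevalley–Eilenberg differential of the bracket $[-,-]_P$ with coefficients in $M$ with action $\rhd$: $\partial(f)(a_1,\dots,a_{n+1})=\sum_{i}(-1)^{i-1}P(a_i)f(a_1,\dots,\widehat{a_i},\dots,a_{n+1})+\sum_{i<j}(-1)^{i+j}f([a_i,a_j]_P,a_1,\dots,\widehat{a_i},\dots,\widehat{a_j},\dots,a_{n+1})$. Define $\mathrm C^n_{\mathrm{NjO}}(\mathfrak g,M):=\mathrm{Hom}(\wedge^n\mathfrak g,M)$ for $n\ge0$ and $\delta_{\mathrm{NjO},M}(f):=-P_M\circ\delta_{\mathrm{Lie},M}(f)+\partial(f)$. *)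

theory Defs
  imports Complex_Main
begin

definition bilinear_map ::
  "('k::field \<Rightarrow> 'a::ab_group_add \<Rightarrow> 'a) \<Rightarrow> ('k \<Rightarrow> 'b::ab_group_add \<Rightarrow> 'b)
   \<Rightarrow> ('k \<Rightarrow> 'c::ab_group_add \<Rightarrow> 'c) \<Rightarrow> ('a \<Rightarrow> 'b \<Rightarrow> 'c) \<Rightarrow> bool" where
  "bilinear_map sa sb sc f \<longleftrightarrow>
     (\<forall>b. Vector_Spaces.linear sa sc (\<lambda>a. f a b)) \<and> (\<forall>a. Vector_Spaces.linear sb sc (\<lambda>b. f a b))"

definition lie_algebra ::
  "('k::field \<Rightarrow> 'g::ab_group_add \<Rightarrow> 'g) \<Rightarrow> ('g \<Rightarrow> 'g \<Rightarrow> 'g) \<Rightarrow> bool" where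
  "lie_algebra sg br \<longleftrightarrow> vector_space sg \<and> bilinear_map sg sg sg br \<and>
     (\<forall>a. br a a = 0) \<and>
     (\<forall>a b c. br a (br b c) + br b (br c a) + br c (br a b) = 0)"

definition lie_rep ::
  "('k::field \<Rightarrow> 'g::ab_group_add \<Rightarrow> 'g) \<Rightarrow> ('g \<Rightarrow> 'g \<Rightarrow> 'g)
   \<Rightarrow> ('k \<Rightarrow> 'm::ab_group_add \<Rightarrow> 'm) \<Rightarrow> ('g \<Rightarrow> 'm \<Rightarrow> 'm) \<Rightarrow> bool" where
  "lie_rep sg br sm act \<longleftrightarrow> lie_algebra sg br \<and> vector_space sm \<and>
     bilinear_map sg sm sm act \<and>
     (\<forall>a b x. act (br a b) x = act a (act b x) - act b (act a x))"

definition nij_bracket :: "('g::ab_group_add \<Rightarrow> 'g \<Rightarrow> 'g) \<Rightarrow> ('g \<Rightarrow> 'g) \<Rightarrow> 'g \<Rightarrow> 'g \<Rightarrow> 'g" where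
  "nij_bracket br P a b = br (P a) b + br a (P b) - P (br a b)"

definition nijenhuis_lie_algebra ::
  "('k::field \<Rightarrow> 'g::ab_group_add \<Rightarrow> 'g) \<Rightarrow> ('g \<Rightarrow> 'g \<Rightarrow> 'g) \<Rightarrow> ('g \<Rightarrow> 'g) \<Rightarrow> bool" where
  "nijenhuis_lie_algebra sg br P \<longleftrightarrow> lie_algebra sg br \<and> Vector_Spaces.linear sg sg P \<and>
     (\<forall>a b. br (P a) (P b) = P (nij_bracket br P a b))"

definition nijenhuis_rep ::
  "('k::field \<Rightarrow> 'g::ab_group_add \<Rightarrow> 'g) \<Rightarrow> ('g \<Rightarrow> 'g \<Rightarrow> 'g) \<Rightarrow> ('g \<Rightarrow> 'g)
   \<Rightarrow> ('k \<Rightarrow> 'm::ab_group_add \<Rightarrow> 'm) \<Rightarrow> ('g \<Rightarrow> 'm \<Rightarrow> 'm) \<Rightarrow> ('m \<Rightarrow> 'm) \<Rightarrow> bool" where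
  "nijenhuis_rep sg br P sm act PM \<longleftrightarrow> nijenhuis_lie_algebra sg br P \<and> lie_rep sg br sm act \<and>
     Vector_Spaces.linear sm sm PM \<and>
     (\<forall>a x. act (P a) (PM x) = PM (act (P a) x + act a (PM x) - PM (act a x)))"

text \<open>Cochains: Hom(\<wedge>^n g, M) realised as alternating multilinear maps on
lists of length n (values on lists of other lengths are irrelevant).\<close>
definition cochain ::
  "('k::field \<Rightarrow> 'g::ab_group_add \<Rightarrow> 'g) \<Rightarrow> ('k \<Rightarrow> 'm::ab_group_add \<Rightarrow> 'm)
   \<Rightarrow> nat \<Rightarrow> ('g list \<Rightarrow> 'm) \<Rightarrow> bool" where
  "cochain sg sm n f \<longleftrightarrow>
     (\<forall>as. length as = n \<longrightarrow> (\<forall>i<n. Vector_Spaces.linear sg sm (\<lambda>x. f (as[i := x])))) \<and>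
     (\<forall>as. length as = n \<longrightarrow> (\<forall>i j. i < j \<and> j < n \<and> as ! i = as ! j \<longrightarrow> f as = 0))"

definition del_at :: "nat \<Rightarrow> 'a list \<Rightarrow> 'a list" where
  "del_at i xs = take i xs @ drop (Suc i) xs"

text \<open>Chevalley--Eilenberg differential of a bracket br with coefficients in a
module with action act (indices 0-based, so (-1)^(i-1) becomes (-1)^i and
(-1)^(i+j) stays (-1)^(i+j)).\<close>
definition ce_diff ::
  "('k::field \<Rightarrow> 'm::ab_group_add \<Rightarrow> 'm) \<Rightarrow> ('g \<Rightarrow> 'g \<Rightarrow> 'g) \<Rightarrow> ('g \<Rightarrow> 'm \<Rightarrow> 'm)
   \<Rightarrow> ('g list \<Rightarrow> 'm) \<Rightarrow> 'g list \<Rightarrow> 'm" where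
  "ce_diff sm br act f as =
     (\<Sum>i<length as. sm ((-1) ^ i) (act (as ! i) (f (del_at i as)))) +
     (\<Sum>j<length as. \<Sum>i<j. sm ((-1) ^ (i + j))
         (f (br (as ! i) (as ! j) # del_at i (del_at j as))))"

definition njo_diff ::
  "('k::field \<Rightarrow> 'm::ab_group_add \<Rightarrow> 'm) \<Rightarrow> ('g::ab_group_add \<Rightarrow> 'g \<Rightarrow> 'g) \<Rightarrow> ('g \<Rightarrow> 'g)
   \<Rightarrow> ('g \<Rightarrow> 'm \<Rightarrow> 'm) \<Rightarrow> ('m \<Rightarrow> 'm) \<Rightarrow> ('g list \<Rightarrow> 'm) \<Rightarrow> 'g list \<Rightarrow> 'm" where
  "njo_diff sm br P act PM f as =
     ce_diff sm (nij_bracket br P) (\<lambda>a x. act (P a) x) f as - PM (ce_diff sm br act f as)"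

end

theory Submission
  imports Defs
begin

text \<open>Write d for the Chevalley-Eilenberg differential of the bracket [-,-] with action a x, and
d_P for that of the deformed bracket [-,-]_P with action P(a) x, so that the differential in
question is d_P - P_M d. Both brackets make M a Lie module (for [-,-]_P by the Nijenhuis identity),
hence d d = 0 and d_P d_P = 0. Moreover P + id is again a Nijenhuis operator, whose deformed bracket
is [-,-]_P + [-,-] with action P(a) x + a x; so d_(P+id) = d_P + d, and d_(P+id) d_(P+id) = 0 leaves
d_P d + d d_P = 0. Finally (d_P - P_M d)^2 equals -P_M (d_P d + d d_P) plus the terms created by
moving P_M past the action, and those cancel by the compatibility of P_M with P.

The identity d d = 0 is proved for any Lie ring module, using only additivity in the first slot,
alternation in the first two slots, and 2-torsion-freeness of M. Subsequences of the argument list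
are indexed by their sets of positions, the index of an entry inside a subsequence being its rank
in that set; d(dF) then splits into six sums, which cancel by the representation property, by a
parity count of ranks, by the Jacobi identity and by antisymmetry.\<close>

definition signed :: "nat \<Rightarrow> 'a::ab_group_add \<Rightarrow> 'a" where
  "signed e x = (if even e then x else - x)"

lemma signed_0 [simp]: "signed 0 x = x"
  and signed_Suc [simp]: "signed (Suc e) x = - signed e x"
  and signed_zero [simp]: "signed e 0 = 0"
  by (simp_all add: signed_def)

lemma additive_signed: "additive (signed e)"
  by unfold_locales (simp add: signed_def)

lemmas signed_add = additive.add[OF additive_signed]
  and signed_minus = additive.minus[OF additive_signed]
  and signed_diff = additive.diff[OF additive_signed]
  and signed_sum = additive.sum[OF additive_signed]

lemma signed_signed: "signed e (signed e' x) = signed (e + e') x"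
  by (simp add: signed_def)

lemma signed_cancel: "odd (e + e') \<Longrightarrow> signed e x + signed e' x = 0"
  by (auto simp: signed_def)

lemma signed_cong: "even (e + e') \<Longrightarrow> signed e x = signed e' x"
  by (auto simp: signed_def)

lemma signed_if_zero: "signed e (if c then x else 0) = (if c then signed e x else 0)"
  by simp

lemma additive_commute_signed: "additive h \<Longrightarrow> h (signed e x) = signed e (h x)"
  by (simp add: signed_def additive.minus)

lemma (in vector_space) scale_minus_one_power: "scale ((-1) ^ e) x = signed e x"
  by (simp add: signed_def)

lemma linear_imp_additive: "Vector_Spaces.linear s1 s2 f \<Longrightarrow> additive f"
proof -
  assume "Vector_Spaces.linear s1 s2 f"
  then interpret Vector_Spaces.linear s1 s2 f .
  show ?thesis by unfold_locales (rule add)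
qed

lemma if_zero_add: "(if c then x + y else 0) = (if c then x else 0) + (if c then y else (0::'a::ab_group_add))"
  by simp

lemma if_zero_sum: "(if c then sum f I else 0) = (\<Sum>i\<in>I. if c then f i else (0::'a::ab_group_add))"
  by simp

lemma sum_Diff_singleton_if:
  "finite U \<Longrightarrow> sum g (U - {x}) = (\<Sum>y\<in>U. if y \<noteq> x then g y else 0)"
  by (simp add: sum.inter_filter[symmetric] set_diff_eq)

lemma sum_Diff_two_if:
  assumes "finite U"
  shows "sum g (U - {x} - {y}) = (\<Sum>z\<in>U. if z \<noteq> x \<and> z \<noteq> y then g z else 0)"
proof -
  have "U - {x} - {y} = {z \<in> U. z \<noteq> x \<and> z \<noteq> y}" by auto
  then show ?thesis using assms by (simp add: sum.inter_filter)
qed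

definition rank_in :: "nat set \<Rightarrow> nat \<Rightarrow> nat" where
  "rank_in S x = card {y \<in> S. y < x}"

lemma rank_in_nth_sorted_list_of_set:
  assumes "finite S" "i < card S"
  shows "rank_in S (sorted_list_of_set S ! i) = i"
proof -
  let ?xs = "sorted_list_of_set S"
  have sorted: "sorted_wrt (<) ?xs" and len: "length ?xs = card S" and "distinct ?xs"
    by simp_all
  have less_iff: "?xs ! k < ?xs ! i \<longleftrightarrow> k < i" if "k < card S" for k
    using sorted_wrt_nth_less[OF sorted] that assms(2) len
    by (metis less_asym linorder_neqE_nat)
  have S_eq: "S = (!) ?xs ` {..<card S}"
    using assms(1) len by (metis atLeast_upt set_map map_nth set_sorted_list_of_set)
  have "{y \<in> S. y < ?xs ! i} = (!) ?xs ` {..<i}"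
  proof (intro set_eqI iffI)
    fix y assume "y \<in> {y \<in> S. y < ?xs ! i}"
    then obtain k where "k < card S" "y = ?xs ! k" "?xs ! k < ?xs ! i" using S_eq by auto
    then show "y \<in> (!) ?xs ` {..<i}" using less_iff by auto
  next
    fix y assume "y \<in> (!) ?xs ` {..<i}"
    then show "y \<in> {y \<in> S. y < ?xs ! i}" using S_eq less_iff assms(2) by auto
  qed
  moreover have "inj_on ((!) ?xs) {..<i}"
    using \<open>distinct ?xs\<close> assms(2) len by (auto simp: inj_on_def nth_eq_iff_index_eq)
  ultimately show ?thesis by (simp add: rank_in_def card_image)
qed

lemma nth_sorted_list_of_set_rank_in:
  assumes "finite S" "x \<in> S"
  shows "rank_in S x < card S" "sorted_list_of_set S ! rank_in S x = x"
proof -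
  obtain i where "i < card S" "sorted_list_of_set S ! i = x"
    using assms by (metis in_set_conv_nth length_sorted_list_of_set set_sorted_list_of_set)
  moreover from this have "rank_in S x = i"
    using rank_in_nth_sorted_list_of_set[OF assms(1)] by blast
  ultimately show "rank_in S x < card S" "sorted_list_of_set S ! rank_in S x = x"
    by simp_all
qed

lemma rank_in_less:
  assumes "finite S" "z \<in> S" "z < w"
  shows "rank_in S z < rank_in S w"
proof -
  have "{y \<in> S. y < z} \<subset> {y \<in> S. y < w}" using assms by auto
  then show ?thesis unfolding rank_in_def using assms(1) by (simp add: psubset_card_mono)
qed

lemma rank_in_remove:
  assumes "finite S" "x \<in> S"
  shows "rank_in (S - {x}) y + of_bool (x < y) = rank_in S y"
proof -
  have "{z \<in> S - {x}. z < y} = {z \<in> S. z < y} - {x}" by auto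
  moreover have "x < y \<Longrightarrow> card {z \<in> S. z < y} > 0"
    using assms by (auto simp: card_gt_0_iff)
  ultimately show ?thesis using assms by (simp add: rank_in_def card_Diff_singleton)
qed

lemma rank_in_remove_greater: "y < x \<Longrightarrow> rank_in (S - {x}) y = rank_in S y"
  unfolding rank_in_def by (rule arg_cong[where f = card]) auto

lemma rank_in_remove_less: "finite S \<Longrightarrow> x \<in> S \<Longrightarrow> x < y \<Longrightarrow> rank_in S y = Suc (rank_in (S - {x}) y)"
  using rank_in_remove[of S x y] by simp

lemma rank_in_remove_two:
  assumes "finite S" "x \<in> S" "y \<in> S" "x \<noteq> y"
  shows "rank_in (S - {x} - {y}) z + of_bool (x < z) + of_bool (y < z) = rank_in S z"
  using rank_in_remove[of S x z] rank_in_remove[of "S - {x}" y z] assms by simp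

lemma rank_in_remove_less_rank_iff:
  assumes "finite S" "w \<in> S" "z \<in> S" "z \<noteq> w"
  shows "rank_in (S - {w}) z < rank_in S w \<longleftrightarrow> z < w"
  using rank_in_remove[OF assms(1,2), of z] rank_in_less[OF assms(1,2), of z]
    rank_in_less[OF assms(1,3), of w] assms(4)
  by (cases "z < w") auto

lemma of_bool_less_add_greater: "(x::'a::linorder) \<noteq> y \<Longrightarrow> of_bool (x < y) + of_bool (y < x) = (1::nat)"
  by auto

lemma rank_in_parity_act_bracket:
  assumes "finite U" "x \<in> U" "w \<in> U" "z \<in> U" "distinct [x, w, z]"
  shows "odd (rank_in U x + (rank_in (U - {x}) z + rank_in (U - {x}) w) +
    (rank_in U z + rank_in U w + Suc (rank_in (U - {w} - {z}) x)))"
proof -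
  have "rank_in U z = rank_in (U - {x}) z + of_bool (x < z)"
    "rank_in U w = rank_in (U - {x}) w + of_bool (x < w)"
    "rank_in U x = rank_in (U - {w} - {z}) x + of_bool (w < x) + of_bool (z < x)"
    using rank_in_remove[of U x z] rank_in_remove[of U x w] rank_in_remove_two[of U w z x] assms by auto
  moreover have "of_bool (x < w) + of_bool (w < x) = (1::nat)" "of_bool (x < z) + of_bool (z < x) = (1::nat)"
    using assms(5) by (simp_all add: of_bool_less_add_greater)
  ultimately have sum_eq: "rank_in U x + (rank_in (U - {x}) z + rank_in (U - {x}) w) +
      (rank_in U z + rank_in U w + Suc (rank_in (U - {w} - {z}) x)) =
    2 * (rank_in (U - {w} - {z}) x + rank_in (U - {x}) z + rank_in (U - {x}) w + 1) + 1"
    by simp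
  show ?thesis unfolding sum_eq by simp
qed

lemma rank_in_parity_disjoint_pairs:
  assumes "finite U" "u \<in> U" "v \<in> U" "w \<in> U" "z \<in> U"
    and "distinct [u, v, w, z]"
  shows "even (rank_in U z + rank_in U w + (rank_in (U - {w} - {z}) u + rank_in (U - {w} - {z}) v) +
    (rank_in U u + rank_in U v + (rank_in (U - {v} - {u}) z + rank_in (U - {v} - {u}) w)))"
proof -
  have "rank_in U u = rank_in (U - {w} - {z}) u + of_bool (w < u) + of_bool (z < u)"
    "rank_in U v = rank_in (U - {w} - {z}) v + of_bool (w < v) + of_bool (z < v)"
    "rank_in U z = rank_in (U - {v} - {u}) z + of_bool (v < z) + of_bool (u < z)"
    "rank_in U w = rank_in (U - {v} - {u}) w + of_bool (v < w) + of_bool (u < w)"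
    using rank_in_remove_two[of U w z] rank_in_remove_two[of U v u] assms by auto
  moreover have "of_bool (w < u) + of_bool (u < w) = (1::nat)" "of_bool (z < u) + of_bool (u < z) = (1::nat)"
    "of_bool (w < v) + of_bool (v < w) = (1::nat)" "of_bool (z < v) + of_bool (v < z) = (1::nat)"
    using assms(6) by (simp_all add: of_bool_less_add_greater)
  ultimately have sum_eq: "rank_in U z + rank_in U w + (rank_in (U - {w} - {z}) u + rank_in (U - {w} - {z}) v) +
      (rank_in U u + rank_in U v + (rank_in (U - {v} - {u}) z + rank_in (U - {v} - {u}) w)) =
    2 * (rank_in (U - {w} - {z}) u + rank_in (U - {w} - {z}) v +
      rank_in (U - {v} - {u}) z + rank_in (U - {v} - {u}) w + 2)"
    by simp
  show ?thesis unfolding sum_eq by simp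
qed

text \<open>list_on (nth xs) S is the subsequence of xs at the positions in S; the entry at position
x \<in> S has index rank_in S x in it.\<close>

definition list_on :: "(nat \<Rightarrow> 'a) \<Rightarrow> nat set \<Rightarrow> 'a list" where
  "list_on a S = map a (sorted_list_of_set S)"

lemma list_on_nth_lessThan: "list_on (nth xs) {..<length xs} = xs"
  by (simp add: list_on_def lessThan_atLeast0 map_nth)

lemma length_list_on: "finite S \<Longrightarrow> length (list_on a S) = card S"
  by (simp add: list_on_def)

lemma length_del_at: "i < length xs \<Longrightarrow> length (del_at i xs) = length xs - 1"
  by (simp add: del_at_def)

lemma nth_del_at:
  "i < length xs \<Longrightarrow> m < length xs - 1 \<Longrightarrow> del_at i xs ! m = (if m < i then xs ! m else xs ! Suc m)"
  by (auto simp: del_at_def nth_append min_def)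

lemma del_at_Cons_0 [simp]: "del_at 0 (b # xs) = xs"
  and del_at_Cons_Suc [simp]: "del_at (Suc i) (b # xs) = b # del_at i xs"
  by (simp_all add: del_at_def)

lemma del_at_map: "del_at i (map a xs) = map a (del_at i xs)"
  by (simp add: del_at_def take_map drop_map)

lemma del_at_eq_remove1:
  assumes "distinct xs" "i < length xs"
  shows "del_at i xs = remove1 (xs ! i) xs"
proof -
  have decomp: "xs = take i xs @ xs ! i # drop (Suc i) xs" using assms(2) by (rule id_take_nth_drop)
  have "distinct (take i xs @ xs ! i # drop (Suc i) xs)" using assms(1) decomp by metis
  then have "xs ! i \<notin> set (take i xs)" by simp
  then show ?thesis using decomp by (metis del_at_def remove1.simps(2) remove1_append)
qed

lemma nth_list_on_rank_in: "finite S \<Longrightarrow> x \<in> S \<Longrightarrow> list_on a S ! rank_in S x = a x"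
  by (simp add: list_on_def nth_sorted_list_of_set_rank_in)

lemma del_at_list_on_rank_in:
  assumes "finite S" "x \<in> S"
  shows "del_at (rank_in S x) (list_on a S) = list_on a (S - {x})"
  using nth_sorted_list_of_set_rank_in[OF assms]
  by (simp add: list_on_def del_at_map del_at_eq_remove1 sorted_list_of_set_remove[OF assms(1)])

lemma sum_lessThan_list_on:
  assumes "finite S" "m \<le> card S"
  shows "(\<Sum>k<m. h k (list_on a S ! k) (del_at k (list_on a S))) =
    (\<Sum>x\<in>{x \<in> S. rank_in S x < m}. h (rank_in S x) (a x) (list_on a (S - {x})))"
proof (rule sum.reindex_bij_witness[where i = "rank_in S" and j = "(!) (sorted_list_of_set S)"])
  fix k assume "k \<in> {..<m}"
  then have k: "k < m" "k < card S" using assms(2) by auto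
  let ?x = "sorted_list_of_set S ! k"
  have x: "?x \<in> S" using k assms(1) by (metis length_sorted_list_of_set nth_mem set_sorted_list_of_set)
  show rank: "rank_in S ?x = k" using rank_in_nth_sorted_list_of_set[OF assms(1) k(2)] .
  show "?x \<in> {x \<in> S. rank_in S x < m}" using x rank k by simp
  show "h (rank_in S ?x) (a ?x) (list_on a (S - {?x})) = h k (list_on a S ! k) (del_at k (list_on a S))"
    using nth_list_on_rank_in[OF assms(1) x, of a] del_at_list_on_rank_in[OF assms(1) x, of a] rank
    by simp
next
  fix x assume "x \<in> {x \<in> S. rank_in S x < m}"
  then show "sorted_list_of_set S ! rank_in S x = x" "rank_in S x \<in> {..<m}"
    using nth_sorted_list_of_set_rank_in[OF assms(1)] by auto
qed

lemma sum_list_on: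
  assumes "finite S"
  shows "(\<Sum>k<length (list_on a S). h k (list_on a S ! k) (del_at k (list_on a S))) =
    (\<Sum>x\<in>S. h (rank_in S x) (a x) (list_on a (S - {x})))"
proof -
  have "{x \<in> S. rank_in S x < card S} = S"
    using nth_sorted_list_of_set_rank_in[OF assms] by auto
  then show ?thesis
    using sum_lessThan_list_on[OF assms order_refl] by (simp add: length_list_on[OF assms])
qed

lemma sum_pairs_list_on:
  assumes "finite S"
  shows "(\<Sum>l<length (list_on a S). \<Sum>k<l.
      h k l (list_on a S ! k) (list_on a S ! l) (del_at k (del_at l (list_on a S)))) =
    (\<Sum>w\<in>S. \<Sum>z\<in>S. if z < w then h (rank_in S z) (rank_in S w) (a z) (a w) (list_on a (S - {w} - {z})) else 0)"
proof -
  define g where "g l c ys = (\<Sum>k<l. h k l (ys ! k) c (del_at k ys))" for l c ys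
  let ?xs = "list_on a S"
  have "(\<Sum>k<l. h k l (?xs ! k) (?xs ! l) (del_at k (del_at l ?xs))) = g l (?xs ! l) (del_at l ?xs)"
    if "l < length ?xs" for l
    unfolding g_def using that by (intro sum.cong) (auto simp: nth_del_at)
  then have "(\<Sum>l<length (list_on a S). \<Sum>k<l.
      h k l (list_on a S ! k) (list_on a S ! l) (del_at k (del_at l (list_on a S)))) =
    (\<Sum>w\<in>S. g (rank_in S w) (a w) (list_on a (S - {w})))"
    using sum_list_on[OF assms, of g a] by simp
  also have "\<dots> = (\<Sum>w\<in>S. \<Sum>z\<in>S. if z < w
      then h (rank_in S z) (rank_in S w) (a z) (a w) (list_on a (S - {w} - {z})) else 0)"
  proof (rule sum.cong[OF refl])
    fix w assume w: "w \<in> S"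
    have "rank_in S w \<le> card (S - {w})"
      unfolding rank_in_def using assms by (intro card_mono) auto
    then have "g (rank_in S w) (a w) (list_on a (S - {w})) =
      (\<Sum>z\<in>{z \<in> S - {w}. rank_in (S - {w}) z < rank_in S w}.
        h (rank_in (S - {w}) z) (rank_in S w) (a z) (a w) (list_on a (S - {w} - {z})))"
      unfolding g_def using assms by (intro sum_lessThan_list_on) auto
    also have "{z \<in> S - {w}. rank_in (S - {w}) z < rank_in S w} = {z \<in> S. z < w}"
      using rank_in_remove_less_rank_iff[OF assms w] by auto
    also have "(\<Sum>z\<in>{z \<in> S. z < w}. h (rank_in (S - {w}) z) (rank_in S w) (a z) (a w) (list_on a (S - {w} - {z}))) =
      (\<Sum>z\<in>{z \<in> S. z < w}. h (rank_in S z) (rank_in S w) (a z) (a w) (list_on a (S - {w} - {z})))"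
      by (intro sum.cong) (auto simp: rank_in_remove_greater)
    also have "\<dots> = (\<Sum>z\<in>S. if z < w then h (rank_in S z) (rank_in S w) (a z) (a w) (list_on a (S - {w} - {z})) else 0)"
      using assms by (simp add: sum.inter_filter)
    finally show "g (rank_in S w) (a w) (list_on a (S - {w})) = \<dots>" .
  qed
  finally show ?thesis .
qed

definition ce_differential ::
  "('g \<Rightarrow> 'g \<Rightarrow> 'g) \<Rightarrow> ('g \<Rightarrow> 'm \<Rightarrow> 'm) \<Rightarrow> ('g list \<Rightarrow> 'm::ab_group_add) \<Rightarrow> 'g list \<Rightarrow> 'm" where
  "ce_differential B A G xs =
     (\<Sum>i<length xs. signed i (A (xs ! i) (G (del_at i xs)))) +
     (\<Sum>j<length xs. \<Sum>i<j. signed (i + j) (G (B (xs ! i) (xs ! j) # del_at i (del_at j xs))))"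

lemma ce_diff_eq_ce_differential: "vector_space sm \<Longrightarrow> ce_diff sm B A = ce_differential B A"
  by (intro ext) (simp add: ce_diff_def ce_differential_def vector_space.scale_minus_one_power)

lemma ce_differential_list_on:
  assumes "finite S"
  shows "ce_differential B A G (list_on a S) =
    (\<Sum>x\<in>S. signed (rank_in S x) (A (a x) (G (list_on a (S - {x}))))) +
    (\<Sum>w\<in>S. \<Sum>z\<in>S. if z < w
       then signed (rank_in S z + rank_in S w) (G (B (a z) (a w) # list_on a (S - {w} - {z}))) else 0)"
  unfolding ce_differential_def
  using sum_list_on[OF assms, of "\<lambda>k c ys. signed k (A c (G ys))" a]
    sum_pairs_list_on[OF assms, of "\<lambda>k l c c' ys. signed (k + l) (G (B c c' # ys))" a]
  by simp

lemma ce_differential_Cons: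
  "ce_differential B A G (b # xs) =
    A b (G xs) +
    (\<Sum>k<length xs. signed (Suc k) (A (xs ! k) (G (b # del_at k xs)))) +
    (\<Sum>k<length xs. signed (Suc k) (G (B b (xs ! k) # del_at k xs))) +
    (\<Sum>l<length xs. \<Sum>k<l. signed (k + l) (G (B (xs ! k) (xs ! l) # b # del_at k (del_at l xs))))"
  unfolding ce_differential_def
  by (simp only: length_Cons sum.lessThan_Suc_shift)
    (simp del: sum.lessThan_Suc add: sum.distrib sum_subtractf sum_negf add.assoc)

lemma ce_differential_Cons_list_on:
  assumes "finite S"
  shows "ce_differential B A G (b # list_on a S) =
    A b (G (list_on a S)) +
    (\<Sum>x\<in>S. signed (Suc (rank_in S x)) (A (a x) (G (b # list_on a (S - {x}))))) +
    (\<Sum>x\<in>S. signed (Suc (rank_in S x)) (G (B b (a x) # list_on a (S - {x})))) +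
    (\<Sum>w\<in>S. \<Sum>z\<in>S. if z < w
       then signed (rank_in S z + rank_in S w) (G (B (a z) (a w) # b # list_on a (S - {w} - {z}))) else 0)"
  unfolding ce_differential_Cons
  using sum_list_on[OF assms, of "\<lambda>k c ys. signed (Suc k) (A c (G (b # ys)))" a]
    sum_list_on[OF assms, of "\<lambda>k c ys. signed (Suc k) (G (B b c # ys))" a]
    sum_pairs_list_on[OF assms, of "\<lambda>k l c c' ys. signed (k + l) (G (B c c' # b # ys))" a]
  by simp

lemma ce_differential_cong:
  assumes "\<And>ys. Suc (length ys) = length xs \<Longrightarrow> G ys = H ys"
  shows "ce_differential B A G xs = ce_differential B A H xs"
  unfolding ce_differential_def using assms
  by (intro arg_cong2[where f = "(+)"] sum.cong refl) (simp_all add: length_del_at)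

lemma ce_differential_add_cochain:
  assumes "\<And>c. additive (A c)"
  shows "ce_differential B A (\<lambda>ys. G ys + H ys) xs = ce_differential B A G xs + ce_differential B A H xs"
  unfolding ce_differential_def by (simp add: additive.add[OF assms] signed_add sum.distrib algebra_simps)

lemma ce_differential_diff_cochain:
  assumes "\<And>c. additive (A c)"
  shows "ce_differential B A (\<lambda>ys. G ys - H ys) xs = ce_differential B A G xs - ce_differential B A H xs"
  unfolding ce_differential_def by (simp add: additive.diff[OF assms] signed_diff sum_subtractf algebra_simps)

lemma ce_differential_add_structure:
  assumes "\<And>b c R. Suc (Suc (length R)) = length xs \<Longrightarrow> G ((b + c) # R) = G (b # R) + G (c # R)"
  shows "ce_differential (\<lambda>u v. B1 u v + B2 u v) (\<lambda>c m. A1 c m + A2 c m) G xs =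
    ce_differential B1 A1 G xs + ce_differential B2 A2 G xs"
proof -
  have "(\<Sum>j<length xs. \<Sum>i<j. signed (i + j) (G ((B1 (xs ! i) (xs ! j) + B2 (xs ! i) (xs ! j)) # del_at i (del_at j xs)))) =
     (\<Sum>j<length xs. \<Sum>i<j. signed (i + j) (G (B1 (xs ! i) (xs ! j) # del_at i (del_at j xs)))) +
     (\<Sum>j<length xs. \<Sum>i<j. signed (i + j) (G (B2 (xs ! i) (xs ! j) # del_at i (del_at j xs))))"
    unfolding sum.distrib[symmetric] using assms
    by (intro sum.cong refl) (simp add: length_del_at signed_add)
  then show ?thesis unfolding ce_differential_def by (simp add: signed_add sum.distrib algebra_simps)
qed

definition act_commutator_sum ::
  "('g \<Rightarrow> 'm \<Rightarrow> 'm) \<Rightarrow> ('m \<Rightarrow> 'm) \<Rightarrow> ('g list \<Rightarrow> 'm) \<Rightarrow> 'g list \<Rightarrow> 'm::ab_group_add" where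
  "act_commutator_sum A Q G xs =
     (\<Sum>i<length xs. signed i (Q (A (xs ! i) (G (del_at i xs))) - A (xs ! i) (Q (G (del_at i xs)))))"

lemma ce_differential_compose_additive:
  assumes "additive Q"
  shows "ce_differential B A (\<lambda>ys. Q (G ys)) xs = Q (ce_differential B A G xs) - act_commutator_sum A Q G xs"
  unfolding ce_differential_def act_commutator_sum_def
  by (simp add: additive.add[OF assms] additive.sum[OF assms] additive_commute_signed[OF assms]
      signed_diff sum_subtractf algebra_simps)

locale lie_ring_module =
  fixes B :: "'g::ab_group_add \<Rightarrow> 'g \<Rightarrow> 'g" and A :: "'g \<Rightarrow> 'm::ab_group_add \<Rightarrow> 'm"
  assumes bracket_add_left: "B (x + y) z = B x z + B y z"
    and bracket_add_right: "B z (x + y) = B z x + B z y"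
    and bracket_self: "B x x = 0"
    and jacobi: "B x (B y z) + B y (B z x) + B z (B x y) = 0"
    and act_add_left: "A (x + y) m = A x m + A y m"
    and act_add_right: "A x (m + m') = A x m + A x m'"
    and act_bracket: "A (B x y) m = A x (A y m) - A y (A x m)"
begin

lemma additive_act: "additive (A x)"
  by unfold_locales (rule act_add_right)

lemma additive_bracket_left: "additive (\<lambda>x. B x z)"
  by unfold_locales (rule bracket_add_left)

lemma additive_bracket_right: "additive (B z)"
  by unfold_locales (rule bracket_add_right)

lemmas act_zero = additive.zero[OF additive_act]
  and act_sum = additive.sum[OF additive_act]
  and bracket_minus_left = additive.minus[OF additive_bracket_left]
  and bracket_diff_right = additive.diff[OF additive_bracket_right]

lemma act_signed: "A x (signed e m) = signed e (A x m)"
  by (rule additive_commute_signed[OF additive_act])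

lemma act_if_zero: "A x (if c then m else 0) = (if c then A x m else 0)"
  by (simp add: act_zero)

lemma bracket_antisym: "B x y = - B y x"
proof -
  have "B (x + y) (x + y) = B x x + B x y + (B y x + B y y)"
    by (simp add: bracket_add_left bracket_add_right add.assoc)
  then have "B x y + B y x = 0" by (simp add: bracket_self)
  then show ?thesis by (simp add: eq_neg_iff_add_eq_0)
qed

lemma jacobi_left: "B (B u v) w + B (B w u) v + B (B v w) u = 0"
proof -
  have "B (B u v) w + B (B w u) v + B (B v w) u = - (B w (B u v) + B u (B v w) + B v (B w u))"
    by (simp add: bracket_antisym[of "B u v" w] bracket_antisym[of "B w u" v] bracket_antisym[of "B v w" u])
  also have "B w (B u v) + B u (B v w) + B v (B w u) = 0"
    using jacobi[of u v w] by (simp add: algebra_simps)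
  finally show ?thesis by simp
qed

lemma ce_differential_add_first:
  assumes "\<And>b c R. Suc (length R) = k \<Longrightarrow> G ((b + c) # R) = G (b # R) + G (c # R)"
    and "\<And>a b c R. Suc (Suc (length R)) = k \<Longrightarrow> G (a # (b + c) # R) = G (a # b # R) + G (a # c # R)"
    and "length R = k"
  shows "ce_differential B A G ((b + c) # R) = ce_differential B A G (b # R) + ce_differential B A G (c # R)"
proof -
  have "(\<Sum>i<length R. signed (Suc i) (A (R ! i) (G ((b + c) # del_at i R)))) =
      (\<Sum>i<length R. signed (Suc i) (A (R ! i) (G (b # del_at i R)))) +
      (\<Sum>i<length R. signed (Suc i) (A (R ! i) (G (c # del_at i R))))"
    and "(\<Sum>i<length R. signed (Suc i) (G (B (b + c) (R ! i) # del_at i R))) =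
      (\<Sum>i<length R. signed (Suc i) (G (B b (R ! i) # del_at i R))) +
      (\<Sum>i<length R. signed (Suc i) (G (B c (R ! i) # del_at i R)))"
    and "(\<Sum>l<length R. \<Sum>i<l. signed (i + l) (G (B (R ! i) (R ! l) # (b + c) # del_at i (del_at l R)))) =
      (\<Sum>l<length R. \<Sum>i<l. signed (i + l) (G (B (R ! i) (R ! l) # b # del_at i (del_at l R)))) +
      (\<Sum>l<length R. \<Sum>i<l. signed (i + l) (G (B (R ! i) (R ! l) # c # del_at i (del_at l R))))"
    unfolding sum.distrib[symmetric] using assms
    by (auto intro!: sum.cong simp: length_del_at act_add_right bracket_add_left signed_add)
  then show ?thesis
    unfolding ce_differential_Cons by (simp add: act_add_left ac_simps)
qed

end

text \<open>Only the values of F on lists of length n matter; 2-torsion-freeness of M stands in for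
characteristic 0.\<close>

locale lie_ring_cochain = lie_ring_module B A
  for B :: "'g::ab_group_add \<Rightarrow> 'g \<Rightarrow> 'g" and A :: "'g \<Rightarrow> 'm::ab_group_add \<Rightarrow> 'm" +
  fixes F :: "'g list \<Rightarrow> 'm" and n :: nat
  assumes cochain_add_first: "Suc (length R) = n \<Longrightarrow> F ((b + c) # R) = F (b # R) + F (c # R)"
    and cochain_swap: "Suc (Suc (length R)) = n \<Longrightarrow> F (b # c # R) = - F (c # b # R)"
    and two_torsion_free: "(x::'m) + x = 0 \<Longrightarrow> x = 0"
begin

lemma cochain_add_second:
  assumes "Suc (Suc (length R)) = n"
  shows "F (a # (b + c) # R) = F (a # b # R) + F (a # c # R)"
proof -
  have "F (a # (b + c) # R) = - (F (b # a # R) + F (c # a # R))"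
    using assms by (simp add: cochain_swap[OF assms, of a] cochain_add_first)
  also have "\<dots> = F (a # b # R) + F (a # c # R)"
    using cochain_swap[OF assms, of b a] cochain_swap[OF assms, of c a] by simp
  finally show ?thesis .
qed

text \<open>The six kinds of terms of d(dF) on list_on a U, named by the term of the outer and then
of the inner differential; in the bracket-first cases the inner term either involves the new
bracket entry or only other entries.\<close>

definition act_act_part :: "(nat \<Rightarrow> 'g) \<Rightarrow> nat set \<Rightarrow> 'm" where
  "act_act_part a U =
    (\<Sum>x\<in>U. signed (rank_in U x) (A (a x) (\<Sum>y\<in>U - {x}. signed (rank_in (U - {x}) y)
       (A (a y) (F (list_on a (U - {x} - {y})))))))"

definition act_bracket_part :: "(nat \<Rightarrow> 'g) \<Rightarrow> nat set \<Rightarrow> 'm" where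
  "act_bracket_part a U =
    (\<Sum>x\<in>U. signed (rank_in U x) (A (a x) (\<Sum>w\<in>U - {x}. \<Sum>z\<in>U - {x}. if z < w
       then signed (rank_in (U - {x}) z + rank_in (U - {x}) w)
         (F (B (a z) (a w) # list_on a (U - {x} - {w} - {z})))
       else 0)))"

definition bracket_act_part :: "(nat \<Rightarrow> 'g) \<Rightarrow> nat set \<Rightarrow> 'm" where
  "bracket_act_part a U =
    (\<Sum>w\<in>U. \<Sum>z\<in>U. if z < w
       then signed (rank_in U z + rank_in U w) (A (B (a z) (a w)) (F (list_on a (U - {w} - {z}))))
       else 0)"

definition bracket_other_act_part :: "(nat \<Rightarrow> 'g) \<Rightarrow> nat set \<Rightarrow> 'm" where
  "bracket_other_act_part a U =
    (\<Sum>w\<in>U. \<Sum>z\<in>U. if z < w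
       then signed (rank_in U z + rank_in U w) (\<Sum>x\<in>U - {w} - {z}. signed (Suc (rank_in (U - {w} - {z}) x))
         (A (a x) (F (B (a z) (a w) # list_on a (U - {w} - {z} - {x})))))
       else 0)"

definition bracket_bracket_part :: "(nat \<Rightarrow> 'g) \<Rightarrow> nat set \<Rightarrow> 'm" where
  "bracket_bracket_part a U =
    (\<Sum>w\<in>U. \<Sum>z\<in>U. if z < w
       then signed (rank_in U z + rank_in U w) (\<Sum>x\<in>U - {w} - {z}. signed (Suc (rank_in (U - {w} - {z}) x))
         (F (B (B (a z) (a w)) (a x) # list_on a (U - {w} - {z} - {x}))))
       else 0)"

definition disjoint_brackets_part :: "(nat \<Rightarrow> 'g) \<Rightarrow> nat set \<Rightarrow> 'm" where
  "disjoint_brackets_part a U =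
    (\<Sum>w\<in>U. \<Sum>z\<in>U. if z < w
       then signed (rank_in U z + rank_in U w) (\<Sum>v\<in>U - {w} - {z}. \<Sum>u\<in>U - {w} - {z}. if u < v
         then signed (rank_in (U - {w} - {z}) u + rank_in (U - {w} - {z}) v)
           (F (B (a u) (a v) # B (a z) (a w) # list_on a (U - {w} - {z} - {v} - {u})))
         else 0)
       else 0)"

lemma ce_differential_squared_list_on_expand:
  assumes "finite U"
  shows "ce_differential B A (ce_differential B A F) (list_on a U) =
    act_act_part a U + act_bracket_part a U + bracket_act_part a U +
    bracket_other_act_part a U + bracket_bracket_part a U + disjoint_brackets_part a U"
proof -
  have fin: "finite (U - {x})" "finite (U - {x} - {y})" for x y using assms by auto
  show ?thesis
    unfolding act_act_part_def act_bracket_part_def bracket_act_part_def bracket_other_act_part_def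
      bracket_bracket_part_def disjoint_brackets_part_def
    by (simp only: ce_differential_list_on[OF assms] ce_differential_list_on[OF fin(1)]
        ce_differential_Cons_list_on[OF fin(2)] act_add_right signed_add if_zero_add sum.distrib add.assoc)
qed

lemma act_act_part_cancel:
  assumes fin: "finite U"
  shows "act_act_part a U + bracket_act_part a U = 0"
proof -
  define K where "K x y = A (a x) (A (a y) (F (list_on a (U - {x} - {y}))))" for x y
  define ordered where "ordered x y = (if x < y then signed (rank_in U x + rank_in U y) (K x y) else 0)" for x y
  define reversed where "reversed x y = (if x < y then signed (rank_in U x + rank_in U y) (K y x) else 0)" for x y
  have "act_act_part a U = (\<Sum>x\<in>U. \<Sum>y\<in>U. if y \<noteq> x then signed (rank_in U x + rank_in (U - {x}) y) (K x y) else 0)"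
    unfolding act_act_part_def K_def
    by (simp only: sum_Diff_singleton_if[OF fin] act_sum act_if_zero act_signed signed_sum signed_if_zero signed_signed)
  also have "\<dots> = (\<Sum>x\<in>U. \<Sum>y\<in>U. reversed y x - ordered x y)"
    unfolding ordered_def reversed_def
    by (intro sum.cong refl) (auto simp: rank_in_remove_less[OF fin] rank_in_remove_greater add.commute)
  finally have act_act: "act_act_part a U = (\<Sum>x\<in>U. \<Sum>y\<in>U. reversed y x) - (\<Sum>x\<in>U. \<Sum>y\<in>U. ordered x y)"
    by (simp add: sum_subtractf)
  have "U - {x} - {y} = U - {y} - {x}" for x y by blast
  then have "bracket_act_part a U = (\<Sum>w\<in>U. \<Sum>z\<in>U. ordered z w - reversed z w)"
    unfolding bracket_act_part_def ordered_def reversed_def K_def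
    by (intro sum.cong refl) (auto simp: act_bracket signed_diff)
  then have "bracket_act_part a U = (\<Sum>x\<in>U. \<Sum>y\<in>U. ordered x y) - (\<Sum>x\<in>U. \<Sum>y\<in>U. reversed y x)"
    by (simp add: sum_subtractf sum.swap[of "\<lambda>w z. ordered z w"])
  with act_act show ?thesis by simp
qed

lemma act_bracket_part_cancel:
  assumes fin: "finite U"
  shows "act_bracket_part a U + bracket_other_act_part a U = 0"
proof -
  define G where "G x w z = A (a x) (F (B (a z) (a w) # list_on a (U - {x} - {w} - {z})))" for x w z
  define g1 where "g1 x w z = (if w \<noteq> x then if z \<noteq> x then if z < w
    then signed (rank_in U x + (rank_in (U - {x}) z + rank_in (U - {x}) w)) (G x w z) else 0 else 0 else 0)" for x w z
  define g2 where "g2 x w z = (if z < w then if x \<noteq> w \<and> x \<noteq> z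
    then signed (rank_in U z + rank_in U w + Suc (rank_in (U - {w} - {z}) x)) (G x w z) else 0 else 0)" for x w z
  have "act_bracket_part a U = (\<Sum>x\<in>U. \<Sum>w\<in>U. \<Sum>z\<in>U. g1 x w z)"
    unfolding act_bracket_part_def g1_def G_def
    by (simp only: sum_Diff_singleton_if[OF fin] act_sum act_if_zero act_signed signed_sum
        signed_if_zero signed_signed if_zero_sum)
  also have "\<dots> = (\<Sum>w\<in>U. \<Sum>x\<in>U. \<Sum>z\<in>U. g1 x w z)" by (rule sum.swap)
  also have "\<dots> = (\<Sum>w\<in>U. \<Sum>z\<in>U. \<Sum>x\<in>U. g1 x w z)" by (intro sum.cong refl sum.swap)
  finally have act_bracket: "act_bracket_part a U = (\<Sum>w\<in>U. \<Sum>z\<in>U. \<Sum>x\<in>U. g1 x w z)" .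
  have "U - {w} - {z} - {x} = U - {x} - {w} - {z}" for x w z by blast
  then have bracket_act: "bracket_other_act_part a U = (\<Sum>w\<in>U. \<Sum>z\<in>U. \<Sum>x\<in>U. g2 x w z)"
    unfolding bracket_other_act_part_def g2_def G_def
    by (simp only: sum_Diff_two_if[OF fin] signed_sum signed_if_zero signed_signed if_zero_sum)
  have "g1 x w z + g2 x w z = 0" if "x \<in> U" "w \<in> U" "z \<in> U" for x w z
  proof (cases "x \<noteq> w \<and> x \<noteq> z \<and> z < w")
    case True
    then have "distinct [x, w, z]" by auto
    from True signed_cancel[OF rank_in_parity_act_bracket[OF fin that this]] show ?thesis
      unfolding g1_def g2_def by simp
  qed (auto simp: g1_def g2_def)
  then show ?thesis
    unfolding act_bracket bracket_act sum.distrib[symmetric] by simp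
qed

lemma additive_cochain_first: "Suc (length R) = n \<Longrightarrow> additive (\<lambda>x. F (x # R))"
  by unfold_locales (rule cochain_add_first)

lemma cochain_jacobi:
  assumes "Suc (length R) = n"
  shows "F (B (B v w) u # R) - F (B (B u w) v # R) + F (B (B u v) w # R) = 0"
proof -
  interpret additive "\<lambda>x. F (x # R)" by (rule additive_cochain_first[OF assms])
  have "B (B u w) v = - B (B w u) v" by (simp add: bracket_antisym[of u w] bracket_minus_left)
  then have "F (B (B v w) u # R) - F (B (B u w) v # R) + F (B (B u v) w # R) =
      F ((B (B u v) w + B (B w u) v + B (B v w) u) # R)"
    by (simp add: add minus algebra_simps)
  then show ?thesis by (simp add: jacobi_left zero)
qed

definition bracket_bracket_term :: "(nat \<Rightarrow> 'g) \<Rightarrow> nat set \<Rightarrow> nat \<Rightarrow> nat \<Rightarrow> nat \<Rightarrow> 'm" where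
  "bracket_bracket_term a U w z x =
    signed (rank_in U z + rank_in U w + Suc (rank_in (U - {w} - {z}) x))
      (F (B (B (a z) (a w)) (a x) # list_on a (U - {w} - {z} - {x})))"

lemma bracket_bracket_term_cancel:
  assumes fin: "finite U" and card: "card U = Suc (Suc n)"
    and "u \<in> U" "v \<in> U" "w \<in> U" "u < v" "v < w"
  shows "bracket_bracket_term a U w v u + bracket_bracket_term a U w u v + bracket_bracket_term a U v u w = 0"
proof -
  let ?R = "list_on a (U - {w} - {v} - {u})"
  have "card {u, v, w} \<le> card U" using assms by (intro card_mono) auto
  then have len: "Suc (length ?R) = n"
    using assms by (simp add: length_list_on card_Diff_singleton)
  have rank_u: "rank_in (U - {w} - {v}) u = rank_in U u"
    using assms by (simp add: rank_in_remove_greater)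
  have rank_v: "rank_in U v = Suc (rank_in (U - {w} - {u}) v)"
    using assms rank_in_remove_greater[of v w U] rank_in_remove_less[of "U - {w}" u v] by simp
  have rank_w: "rank_in U w = Suc (Suc (rank_in (U - {v} - {u}) w))"
    using assms rank_in_remove_less[of U v w] rank_in_remove_less[of "U - {v}" u w] by simp
  have sets: "U - {w} - {u} - {v} = U - {w} - {v} - {u}" "U - {v} - {u} - {w} = U - {w} - {v} - {u}"
    by blast+
  define E where "E = rank_in U u + rank_in U v + rank_in U w"
  have "bracket_bracket_term a U w v u + bracket_bracket_term a U w u v + bracket_bracket_term a U v u w =
      - signed E (F (B (B (a v) (a w)) (a u) # ?R) - F (B (B (a u) (a w)) (a v) # ?R) + F (B (B (a u) (a v)) (a w) # ?R))"
    unfolding bracket_bracket_term_def E_def sets rank_u rank_v rank_w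
    by (simp add: signed_add signed_diff ac_simps)
  then show ?thesis using cochain_jacobi[OF len] by simp
qed

lemma bracket_bracket_part_zero:
  assumes fin: "finite U" and card: "card U = Suc (Suc n)"
  shows "bracket_bracket_part a U = 0"
proof -
  let ?t = "bracket_bracket_term a U"
  let ?ordered = "\<lambda>f. \<Sum>w\<in>U. \<Sum>z\<in>U. \<Sum>x\<in>U. if x < z \<and> z < w then f w z x else 0"
  have "bracket_bracket_part a U =
      (\<Sum>w\<in>U. \<Sum>z\<in>U. \<Sum>x\<in>U. if z < w then if x \<noteq> w \<and> x \<noteq> z then ?t w z x else 0 else 0)"
    unfolding bracket_bracket_part_def bracket_bracket_term_def
    by (simp only: sum_Diff_two_if[OF fin] signed_sum signed_if_zero signed_signed if_zero_sum)
  also have "\<dots> = ?ordered (\<lambda>w z x. ?t w z x) +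
      (\<Sum>w\<in>U. \<Sum>z\<in>U. \<Sum>x\<in>U. if z < x \<and> x < w then ?t w z x else 0) +
      (\<Sum>w\<in>U. \<Sum>z\<in>U. \<Sum>x\<in>U. if z < w \<and> w < x then ?t w z x else 0)"
    unfolding sum.distrib[symmetric] by (intro sum.cong refl) auto
  also have "(\<Sum>w\<in>U. \<Sum>z\<in>U. \<Sum>x\<in>U. if z < x \<and> x < w then ?t w z x else 0) = ?ordered (\<lambda>w z x. ?t w x z)"
    by (intro sum.cong refl sum.swap)
  also have "(\<Sum>w\<in>U. \<Sum>z\<in>U. \<Sum>x\<in>U. if z < w \<and> w < x then ?t w z x else 0) = ?ordered (\<lambda>w z x. ?t z x w)"
    by (subst sum.swap) (intro sum.cong refl sum.swap)
  also have "?ordered (\<lambda>w z x. ?t w z x) + ?ordered (\<lambda>w z x. ?t w x z) + ?ordered (\<lambda>w z x. ?t z x w) =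
      ?ordered (\<lambda>w z x. ?t w z x + ?t w x z + ?t z x w)"
    by (simp add: sum.distrib[symmetric] if_zero_add)
  also have "\<dots> = 0"
    using bracket_bracket_term_cancel[OF fin card] by (intro sum.neutral ballI) simp
  finally show ?thesis .
qed

definition disjoint_brackets_term :: "(nat \<Rightarrow> 'g) \<Rightarrow> nat set \<Rightarrow> nat \<Rightarrow> nat \<Rightarrow> nat \<Rightarrow> nat \<Rightarrow> 'm" where
  "disjoint_brackets_term a U w z v u =
    signed (rank_in U z + rank_in U w + (rank_in (U - {w} - {z}) u + rank_in (U - {w} - {z}) v))
      (F (B (a u) (a v) # B (a z) (a w) # list_on a (U - {w} - {z} - {v} - {u})))"

lemma disjoint_brackets_term_antisym:
  assumes fin: "finite U" and card: "card U = Suc (Suc n)"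
    and "u \<in> U" "v \<in> U" "w \<in> U" "z \<in> U" "distinct [u, v, w, z]"
  shows "disjoint_brackets_term a U w z v u = - disjoint_brackets_term a U v u w z"
proof -
  let ?R = "list_on a (U - {w} - {z} - {v} - {u})"
  have "card {u, v, w, z} \<le> card U" using assms by (intro card_mono) auto
  then have len: "Suc (Suc (length ?R)) = n"
    using assms by (simp add: length_list_on card_Diff_singleton)
  have sets: "U - {v} - {u} - {w} - {z} = U - {w} - {z} - {v} - {u}" by blast
  have swap: "F (B (a z) (a w) # B (a u) (a v) # ?R) = - F (B (a u) (a v) # B (a z) (a w) # ?R)"
    by (rule cochain_swap[OF len])
  show ?thesis
    unfolding disjoint_brackets_term_def sets swap signed_minus minus_minus
    by (rule signed_cong[OF rank_in_parity_disjoint_pairs[OF assms(1,3-7)]])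
qed

lemma disjoint_brackets_part_zero:
  assumes fin: "finite U" and card: "card U = Suc (Suc n)"
  shows "disjoint_brackets_part a U = 0"
proof -
  define ok where "ok w z v u \<longleftrightarrow> z < w \<and> u < v \<and> distinct [u, v, w, z]" for w z v u :: nat
  define G where "G p q = (case (p, q) of ((w, z), (v, u)) \<Rightarrow>
    if ok w z v u then disjoint_brackets_term a U w z v u else 0)" for p q
  have "disjoint_brackets_part a U = (\<Sum>w\<in>U. \<Sum>z\<in>U. \<Sum>v\<in>U. \<Sum>u\<in>U.
      if z < w then if v \<noteq> w \<and> v \<noteq> z then if u \<noteq> w \<and> u \<noteq> z then if u < v
        then disjoint_brackets_term a U w z v u else 0 else 0 else 0 else 0)"
    unfolding disjoint_brackets_part_def disjoint_brackets_term_def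
    by (simp only: sum_Diff_two_if[OF fin] signed_sum signed_if_zero signed_signed if_zero_sum)
  also have "\<dots> = (\<Sum>p\<in>U \<times> U. \<Sum>q\<in>U \<times> U. G p q)"
    unfolding sum.cartesian_product' G_def ok_def by (intro sum.cong refl) auto
  finally have part: "disjoint_brackets_part a U = (\<Sum>p\<in>U \<times> U. \<Sum>q\<in>U \<times> U. G p q)" .
  have antisym: "G p q = - G q p" if "p \<in> U \<times> U" "q \<in> U \<times> U" for p q
  proof -
    obtain w z v u where pq: "p = (w, z)" "q = (v, u)" by (metis surj_pair)
    with that have mem: "w \<in> U" "z \<in> U" "v \<in> U" "u \<in> U" by auto
    have ok_sym: "ok v u w z \<longleftrightarrow> ok w z v u" unfolding ok_def by auto
    show ?thesis
    proof (cases "ok w z v u")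
      case True
      then show ?thesis
        using disjoint_brackets_term_antisym[OF fin card mem(4,3,1,2)] by (simp add: G_def pq ok_sym ok_def)
    qed (simp add: G_def pq ok_sym)
  qed
  have "(\<Sum>p\<in>U \<times> U. \<Sum>q\<in>U \<times> U. G p q) = (\<Sum>q\<in>U \<times> U. \<Sum>p\<in>U \<times> U. G p q)"
    by (rule sum.swap)
  also have "\<dots> = (\<Sum>q\<in>U \<times> U. \<Sum>p\<in>U \<times> U. - G q p)"
    by (intro sum.cong refl antisym)
  also have "\<dots> = - (\<Sum>q\<in>U \<times> U. \<Sum>p\<in>U \<times> U. G q p)"
    by (simp add: sum_negf)
  finally have "disjoint_brackets_part a U + disjoint_brackets_part a U = 0"
    unfolding part by (simp only: eq_neg_iff_add_eq_0)
  then show ?thesis by (rule two_torsion_free)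
qed

lemma ce_differential_squared_list_on:
  assumes "finite U" "card U = Suc (Suc n)"
  shows "ce_differential B A (ce_differential B A F) (list_on a U) = 0"
proof -
  have "ce_differential B A (ce_differential B A F) (list_on a U) =
      (act_act_part a U + bracket_act_part a U) + (act_bracket_part a U + bracket_other_act_part a U) +
      bracket_bracket_part a U + disjoint_brackets_part a U"
    unfolding ce_differential_squared_list_on_expand[OF assms(1)] by (simp only: ac_simps)
  then show ?thesis
    by (simp add: act_act_part_cancel[OF assms(1)] act_bracket_part_cancel[OF assms(1)]
        bracket_bracket_part_zero[OF assms] disjoint_brackets_part_zero[OF assms])
qed

theorem ce_differential_squared:
  assumes "length xs = n + 2"
  shows "ce_differential B A (ce_differential B A F) xs = 0"
proof -
  have "ce_differential B A (ce_differential B A F) (list_on (nth xs) {..<length xs}) = 0"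
    using assms by (intro ce_differential_squared_list_on) auto
  then show ?thesis by (simp only: list_on_nth_lessThan)
qed

end

locale nijenhuis_lie_ring = lie_ring_module B A
  for B :: "'g::ab_group_add \<Rightarrow> 'g \<Rightarrow> 'g" and A :: "'g \<Rightarrow> 'm::ab_group_add \<Rightarrow> 'm" +
  fixes P :: "'g \<Rightarrow> 'g"
  assumes additive_P: "additive P"
    and nijenhuis: "B (P x) (P y) = P (nij_bracket B P x y)"
begin

lemmas P_add = additive.add[OF additive_P]
  and P_diff = additive.diff[OF additive_P]
  and P_zero = additive.zero[OF additive_P]

lemma nij_bracket_add_left: "nij_bracket B P (x + y) z = nij_bracket B P x z + nij_bracket B P y z"
  and nij_bracket_add_right: "nij_bracket B P z (x + y) = nij_bracket B P z x + nij_bracket B P z y"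
  by (simp_all add: nij_bracket_def P_add P_diff bracket_add_left bracket_add_right algebra_simps)

lemma nij_bracket_self: "nij_bracket B P x x = 0"
  using bracket_antisym[of "P x" x] by (simp add: nij_bracket_def bracket_self P_zero)

lemma nij_bracket_nested:
  "nij_bracket B P u (nij_bracket B P v w) =
    B (P u) (B (P v) w) + B (P u) (B v (P w)) + B u (B (P v) (P w))
    - P (B (P u) (B v w)) - P (B u (B (P v) w)) - P (B u (B v (P w))) + P (P (B u (B v w)))"
proof -
  have "nij_bracket B P u (nij_bracket B P v w) =
      B (P u) (nij_bracket B P v w) + B u (P (nij_bracket B P v w)) - P (B u (nij_bracket B P v w))"
    by (rule nij_bracket_def)
  also have "P (nij_bracket B P v w) = B (P v) (P w)" by (rule nijenhuis[symmetric])
  also have "B (P u) (nij_bracket B P v w) = B (P u) (B (P v) w) + B (P u) (B v (P w)) - B (P u) (P (B v w))"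
    by (simp add: nij_bracket_def bracket_add_right bracket_diff_right)
  also have "B (P u) (P (B v w)) = P (B (P u) (B v w)) + P (B u (P (B v w))) - P (P (B u (B v w)))"
    by (simp add: nijenhuis nij_bracket_def P_add P_diff)
  also have "P (B u (nij_bracket B P v w)) = P (B u (B (P v) w)) + P (B u (B v (P w))) - P (B u (P (B v w)))"
    by (simp add: nij_bracket_def bracket_add_right bracket_diff_right P_add P_diff)
  finally show ?thesis by (simp add: algebra_simps)
qed

lemma nij_bracket_jacobi:
  "nij_bracket B P x (nij_bracket B P y z) + nij_bracket B P y (nij_bracket B P z x) +
    nij_bracket B P z (nij_bracket B P x y) = 0"
proof -
  let ?J = "\<lambda>a b c. B a (B b c) + B b (B c a) + B c (B a b)"
  have "nij_bracket B P x (nij_bracket B P y z) + nij_bracket B P y (nij_bracket B P z x) +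
      nij_bracket B P z (nij_bracket B P x y) =
    ?J (P x) (P y) z + ?J (P y) (P z) x + ?J (P z) (P x) y
      - P (?J (P x) y z + ?J (P y) z x + ?J (P z) x y) + P (P (?J x y z))"
    unfolding nij_bracket_nested by (simp add: P_add P_diff algebra_simps)
  then show ?thesis by (simp only: jacobi P_zero add_0_left diff_self add_0_right)
qed

lemma lie_ring_module_deformed: "lie_ring_module (nij_bracket B P) (\<lambda>x. A (P x))"
  by (rule lie_ring_module.intro)
    (simp_all add: nij_bracket_add_left nij_bracket_add_right nij_bracket_self nij_bracket_jacobi
      act_add_left act_add_right P_add nijenhuis[symmetric] act_bracket)

lemma nij_bracket_shift: "nij_bracket B (\<lambda>x. P x + x) u v = nij_bracket B P u v + B u v"
  by (simp add: nij_bracket_def bracket_add_left bracket_add_right P_add algebra_simps)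

lemma nijenhuis_lie_ring_shift: "nijenhuis_lie_ring B A (\<lambda>x. P x + x)"
proof (intro nijenhuis_lie_ring.intro nijenhuis_lie_ring_axioms.intro)
  show "lie_ring_module B A" by (rule lie_ring_module_axioms)
  show "additive (\<lambda>x. P x + x)" by unfold_locales (simp add: P_add algebra_simps)
next
  fix x y
  have "B (P x + x) (P y + y) = B (P x) (P y) + B (P x) y + B x (P y) + B x y"
    by (simp add: bracket_add_left bracket_add_right algebra_simps)
  also have "\<dots> = P (nij_bracket B P x y) + P (B x y) + nij_bracket B P x y + B x y"
    by (simp add: nijenhuis nij_bracket_def P_add P_diff algebra_simps)
  also have "\<dots> = P (nij_bracket B (\<lambda>x. P x + x) x y) + nij_bracket B (\<lambda>x. P x + x) x y"
    unfolding nij_bracket_shift by (simp add: P_add algebra_simps)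
  finally show "B (P x + x) (P y + y) = P (nij_bracket B (\<lambda>x. P x + x) x y) + nij_bracket B (\<lambda>x. P x + x) x y" .
qed

lemma ce_differential_shift:
  assumes "\<And>b c R. Suc (Suc (length R)) = length xs \<Longrightarrow> G ((b + c) # R) = G (b # R) + G (c # R)"
  shows "ce_differential (nij_bracket B (\<lambda>x. P x + x)) (\<lambda>x. A (P x + x)) G xs =
    ce_differential (nij_bracket B P) (\<lambda>x. A (P x)) G xs + ce_differential B A G xs"
proof -
  have "nij_bracket B (\<lambda>x. P x + x) = (\<lambda>u v. nij_bracket B P u v + B u v)"
    by (intro ext) (rule nij_bracket_shift)
  moreover have "(\<lambda>x. A (P x + x)) = (\<lambda>x m. A (P x) m + A x m)"
    by (intro ext) (rule act_add_left)
  ultimately show ?thesis using assms by (simp add: ce_differential_add_structure)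
qed

end

lemma act_commutator_sum_nijenhuis:
  assumes Q: "additive Q"
    and rep: "\<And>a x. A (P a) (Q x) = Q (A (P a) x + A a (Q x) - Q (A a x))"
  shows "act_commutator_sum (\<lambda>a. A (P a)) Q G xs = Q (act_commutator_sum A Q G xs)"
  unfolding act_commutator_sum_def
  by (simp add: rep additive.add[OF Q] additive.diff[OF Q] additive.sum[OF Q]
      additive_commute_signed[OF Q] algebra_simps)

locale nijenhuis_cochain = nijenhuis_lie_ring B A P + lie_ring_cochain B A F n
  for B :: "'g::ab_group_add \<Rightarrow> 'g \<Rightarrow> 'g" and A :: "'g \<Rightarrow> 'm::ab_group_add \<Rightarrow> 'm"
    and P :: "'g \<Rightarrow> 'g" and F :: "'g list \<Rightarrow> 'm" and n :: nat
begin

lemma lie_ring_cochain_deformed: "lie_ring_cochain (nij_bracket B P) (\<lambda>x. A (P x)) F n"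
  using lie_ring_module_deformed lie_ring_cochain_axioms by (simp add: lie_ring_cochain_def)

lemma nijenhuis_cochain_shift: "nijenhuis_cochain B A (\<lambda>x. P x + x) F n"
  using nijenhuis_lie_ring_shift lie_ring_cochain_axioms
  by (simp add: nijenhuis_cochain_def lie_ring_cochain_def lie_ring_module_axioms)

text \<open>P + id is again Nijenhuis and its differential is d_P + d, so the cross terms of its
square must vanish.\<close>

lemma ce_differential_anticommute:
  assumes len: "length xs = n + 2"
  shows "ce_differential (nij_bracket B P) (\<lambda>x. A (P x)) (ce_differential B A F) xs +
    ce_differential B A (ce_differential (nij_bracket B P) (\<lambda>x. A (P x)) F) xs = 0"
proof -
  let ?d' = "ce_differential (nij_bracket B P) (\<lambda>x. A (P x))" and ?d = "ce_differential B A"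
  let ?D = "\<lambda>ys. ?d' F ys + ?d F ys"
  interpret shifted: nijenhuis_cochain B A "\<lambda>x. P x + x" F n by (rule nijenhuis_cochain_shift)
  interpret deformed: lie_ring_module "nij_bracket B P" "\<lambda>x. A (P x)" by (rule lie_ring_module_deformed)
  have "?D ((b + c) # R) = ?D (b # R) + ?D (c # R)" if "length R = n" for b c R
    using deformed.ce_differential_add_first[OF cochain_add_first cochain_add_second that]
      ce_differential_add_first[OF cochain_add_first cochain_add_second that]
    by (simp add: algebra_simps)
  then have D_add: "?D ((b + c) # R) = ?D (b # R) + ?D (c # R)" if "Suc (Suc (length R)) = length xs" for b c R
    using that len by simp
  have "0 = ce_differential (nij_bracket B (\<lambda>x. P x + x)) (\<lambda>x. A (P x + x))
      (ce_differential (nij_bracket B (\<lambda>x. P x + x)) (\<lambda>x. A (P x + x)) F) xs"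
    using lie_ring_cochain.ce_differential_squared[OF shifted.lie_ring_cochain_deformed len] by simp
  also have "\<dots> = ce_differential (nij_bracket B (\<lambda>x. P x + x)) (\<lambda>x. A (P x + x)) ?D xs"
    using len by (intro ce_differential_cong ce_differential_shift cochain_add_first) simp_all
  also have "\<dots> = ?d' ?D xs + ?d ?D xs"
    using D_add by (rule ce_differential_shift)
  also have "\<dots> = ?d' (?d' F) xs + ?d' (?d F) xs + (?d (?d' F) xs + ?d (?d F) xs)"
    by (simp add: ce_differential_add_cochain deformed.additive_act additive_act)
  finally show ?thesis
    using ce_differential_squared[OF len] lie_ring_cochain.ce_differential_squared[OF lie_ring_cochain_deformed len]
    by (simp add: algebra_simps)
qed

theorem nijenhuis_differential_squared:
  assumes Q: "additive Q"
    and rep: "\<And>a x. A (P a) (Q x) = Q (A (P a) x + A a (Q x) - Q (A a x))"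
    and len: "length xs = n + 2"
  defines "D \<equiv> \<lambda>G ys. ce_differential (nij_bracket B P) (\<lambda>x. A (P x)) G ys - Q (ce_differential B A G ys)"
  shows "D (D F) xs = 0"
proof -
  let ?d' = "ce_differential (nij_bracket B P) (\<lambda>x. A (P x))" and ?d = "ce_differential B A"
  have "D (D F) xs =
      ?d' (?d' F) xs - (Q (?d' (?d F) xs) - act_commutator_sum (\<lambda>x. A (P x)) Q (?d F) xs)
      - Q (?d (?d' F) xs - (Q (?d (?d F) xs) - act_commutator_sum A Q (?d F) xs))"
    unfolding D_def
    by (simp only: ce_differential_diff_cochain additive_act ce_differential_compose_additive[OF Q])
  also have "\<dots> = - Q (?d' (?d F) xs + ?d (?d' F) xs)"
    using ce_differential_squared[OF len] lie_ring_cochain.ce_differential_squared[OF lie_ring_cochain_deformed len]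
    by (simp add: act_commutator_sum_nijenhuis[where A = A and P = P, OF Q rep] additive.add[OF Q] additive.diff[OF Q]
        additive.zero[OF Q] algebra_simps)
  also have "\<dots> = 0"
    using ce_differential_anticommute[OF len] by (simp add: additive.zero[OF Q])
  finally show ?thesis .
qed

end

lemma bilinear_map_add_left: "bilinear_map sa sb sc f \<Longrightarrow> f (x + y) z = f x z + f y z"
  by (auto simp: bilinear_map_def dest!: linear_imp_additive intro: additive.add)

lemma bilinear_map_add_right: "bilinear_map sa sb sc f \<Longrightarrow> f z (x + y) = f z x + f z y"
  by (auto simp: bilinear_map_def dest!: linear_imp_additive intro: additive.add)

lemma lie_rep_imp_lie_ring_module:
  assumes "lie_rep sg br sm act"
  shows "lie_ring_module br act"
proof -
  from assms have br: "bilinear_map sg sg sg br" and act: "bilinear_map sg sm sm act"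
    unfolding lie_rep_def lie_algebra_def by auto
  from assms show ?thesis
    unfolding lie_rep_def lie_algebra_def
    by unfold_locales
      (simp_all add: bilinear_map_add_left[OF br] bilinear_map_add_right[OF br]
        bilinear_map_add_left[OF act] bilinear_map_add_right[OF act])
qed

lemma vector_space_two_torsion_free:
  fixes scale :: "'k::field_char_0 \<Rightarrow> 'm::ab_group_add \<Rightarrow> 'm" and x :: 'm
  assumes "vector_space scale" "x + x = 0"
  shows "x = 0"
proof -
  interpret vector_space scale by fact
  have "x = scale (1/2 + 1/2) x" by simp
  also have "\<dots> = scale (1/2) (x + x)" by (simp only: scale_left_distrib scale_right_distrib)
  finally show ?thesis using assms(2) by simp
qed

lemma cochain_additive_slot:
  "cochain sg sm n f \<Longrightarrow> length as = n \<Longrightarrow> i < n \<Longrightarrow> additive (\<lambda>x. f (as[i := x]))"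
  unfolding cochain_def by (blast intro: linear_imp_additive)

lemma cochain_add_head:
  assumes "cochain sg sm n f" "Suc (length R) = n"
  shows "f ((b + c) # R) = f (b # R) + f (c # R)"
  using additive.add[OF cochain_additive_slot[OF assms(1), of "b # R" 0]] assms(2) by simp

lemma cochain_add_second_entry:
  assumes "cochain sg sm n f" "Suc (Suc (length R)) = n"
  shows "f (a # (b + c) # R) = f (a # b # R) + f (a # c # R)"
  using additive.add[OF cochain_additive_slot[OF assms(1), of "a # b # R" 1]] assms(2) by simp

lemma cochain_swap_head:
  assumes "cochain sg sm n f" "Suc (Suc (length R)) = n"
  shows "f (b # c # R) = - f (c # b # R)"
proof -
  have diagonal: "f (x # x # R) = 0" for x
  proof -
    have "\<forall>i j. i < j \<and> j < n \<and> (x # x # R) ! i = (x # x # R) ! j \<longrightarrow> f (x # x # R) = 0"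
      using assms unfolding cochain_def by auto
    from this[rule_format, of 0 1] show ?thesis using assms(2) by simp
  qed
  have "f ((b + c) # (b + c) # R) = f (b # b # R) + f (b # c # R) + (f (c # b # R) + f (c # c # R))"
    using assms by (simp add: cochain_add_head cochain_add_second_entry add.assoc)
  then have "f (b # c # R) + f (c # b # R) = 0" by (simp add: diagonal)
  then show ?thesis by (simp add: eq_neg_iff_add_eq_0)
qed

lemma nijenhuis_rep_imp_nijenhuis_cochain:
  fixes sg :: "'k::field_char_0 \<Rightarrow> 'g::ab_group_add \<Rightarrow> 'g" and sm :: "'k \<Rightarrow> 'm::ab_group_add \<Rightarrow> 'm"
  assumes "nijenhuis_rep sg br P sm act PM" "cochain sg sm n f"
  shows "nijenhuis_cochain br act P f n"
proof -
  from assms(1) have rep: "lie_rep sg br sm act" and P: "Vector_Spaces.linear sg sg P"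
    and nij: "\<And>a b. br (P a) (P b) = P (nij_bracket br P a b)"
    unfolding nijenhuis_rep_def nijenhuis_lie_algebra_def by auto
  have module: "lie_ring_module br act" using rep by (rule lie_rep_imp_lie_ring_module)
  have "vector_space sm" using rep by (simp add: lie_rep_def)
  have "nijenhuis_lie_ring br act P"
    by (rule nijenhuis_lie_ring.intro[OF module nijenhuis_lie_ring_axioms.intro])
      (rule linear_imp_additive[OF P], rule nij)
  moreover have "lie_ring_cochain br act f n"
  proof (rule lie_ring_cochain.intro[OF module lie_ring_cochain_axioms.intro])
    show "f ((b + c) # R) = f (b # R) + f (c # R)" if "Suc (length R) = n" for b c R
      using assms(2) that by (rule cochain_add_head)
    show "f (b # c # R) = - f (c # b # R)" if "Suc (Suc (length R)) = n" for b c R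
      using assms(2) that by (rule cochain_swap_head)
    show "x = 0" if "x + x = 0" for x :: 'm
      using \<open>vector_space sm\<close> that by (rule vector_space_two_torsion_free)
  qed
  ultimately show ?thesis by (simp add: nijenhuis_cochain_def)
qed

lemma njo_diff_eq_ce_differential:
  "vector_space sm \<Longrightarrow> njo_diff sm br P act PM G =
    (\<lambda>xs. ce_differential (nij_bracket br P) (\<lambda>a. act (P a)) G xs - PM (ce_differential br act G xs))"
  by (intro ext) (simp add: njo_diff_def ce_diff_eq_ce_differential)

theorem lemma6p2:
  fixes sg :: "'k::field_char_0 \<Rightarrow> 'g::ab_group_add \<Rightarrow> 'g"
    and sm :: "'k \<Rightarrow> 'm::ab_group_add \<Rightarrow> 'm"
    and br :: "'g \<Rightarrow> 'g \<Rightarrow> 'g" and P :: "'g \<Rightarrow> 'g"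
    and act :: "'g \<Rightarrow> 'm \<Rightarrow> 'm" and PM :: "'m \<Rightarrow> 'm"
    and f :: "'g list \<Rightarrow> 'm" and n :: nat
  assumes "nijenhuis_lie_algebra sg br P"
    and "nijenhuis_rep sg br P sm act PM"
    and "cochain sg sm n f"
    and "length as = n + 2"
  shows "njo_diff sm br P act PM (njo_diff sm br P act PM f) as = 0"
proof -
  \<comment> \<open>the first hypothesis is part of the second\<close>
  from assms(2) have "vector_space sm" and PM: "Vector_Spaces.linear sm sm PM"
    and rep: "\<And>a x. act (P a) (PM x) = PM (act (P a) x + act a (PM x) - PM (act a x))"
    unfolding nijenhuis_rep_def lie_rep_def by auto
  interpret nijenhuis_cochain br act P f n
    by (rule nijenhuis_rep_imp_nijenhuis_cochain[OF assms(2,3)])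
  show ?thesis
    using nijenhuis_differential_squared[OF linear_imp_additive[OF PM] rep assms(4)]
    by (simp add: njo_diff_eq_ce_differential[OF \<open>vector_space sm\<close>])
qed

end
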